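(* Let $\mathcal I,\mathcal X$ be non-empty sets and let $(\mathcal I,\langle\cdot\rangle_x)_{x\in\mathcal X}$ be a family of partial magmas satisfying the bi-injectivity property: for all $a,a',b\in\mathcal I$ and $x,x'\in\mathcal X$, $\langle a'b\rangle_{x'}=\langle ab\rangle_x$ implies $x'=x$ and $a'=a$. Then every map $S:\mathcal X\times\mathcal X\to\mathcal X\times\mathcal X$, $S(x,y)=(u,v)$, satisfying the associativity condition $\langle a\langle bc\rangle_y\rangle_x=\langle\langle ab\rangle_u c\rangle_v$ for all $x,y\in\mathcal X$ (with $(u,v)=S(x,y)$) and all $a,b,c\in\mathcal I$, is a pentagon map.
   Context: A partial magma $(\mathcal I,\langle\cdot\rangle)$ is a non-empty set $\mathcal I$ with a binary operation $\langle\cdot\rangle:D\to\mathcal I$, $D\subseteq\mathcal I\times\mathcal I$, written $(a,b)\mapsto\langle ab\rangle$. For a set $Y$ and $S:Y\times Y\to Y\times Y$, define on $Y^3$: $S_{12}=S\times\mathrm{id}_Y$, $S_{23}=\mathrm{id}_Y\times S$, $S_{13}(y_1,y_2,y_3)=(p,y_2,q)$ with $(p,q)=S(y_1,y_3)$. $S$ is a pentagon map if $S_{12}\circ S_{13}\circ S_{23}=S_{23}\circ S_{12}$ (rightmost applied first). *)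

theory Defs
  imports Main
begin

text \<open>A partial binary operation on 'i is modelled as 'i \<Rightarrow> 'i \<Rightarrow> 'i option;
  its domain D is the set of pairs where the value is not None.\<close>

type_synonym 'i pmagma = "'i \<Rightarrow> 'i \<Rightarrow> 'i option"

definition S12 :: "('y \<times> 'y \<Rightarrow> 'y \<times> 'y) \<Rightarrow> 'y \<times> 'y \<times> 'y \<Rightarrow> 'y \<times> 'y \<times> 'y" where
  "S12 S = (\<lambda>(y1, y2, y3). let (p, q) = S (y1, y2) in (p, q, y3))"

definition S23 :: "('y \<times> 'y \<Rightarrow> 'y \<times> 'y) \<Rightarrow> 'y \<times> 'y \<times> 'y \<Rightarrow> 'y \<times> 'y \<times> 'y" where
  "S23 S = (\<lambda>(y1, y2, y3). let (p, q) = S (y2, y3) in (y1, p, q))"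

definition S13 :: "('y \<times> 'y \<Rightarrow> 'y \<times> 'y) \<Rightarrow> 'y \<times> 'y \<times> 'y \<Rightarrow> 'y \<times> 'y \<times> 'y" where
  "S13 S = (\<lambda>(y1, y2, y3). let (p, q) = S (y1, y3) in (p, y2, q))"

definition pentagon_map :: "('y \<times> 'y \<Rightarrow> 'y \<times> 'y) \<Rightarrow> bool" where
  "pentagon_map S \<longleftrightarrow> S12 S \<circ> S13 S \<circ> S23 S = S23 S \<circ> S12 S"

definition bi_injective :: "('x \<Rightarrow> 'i pmagma) \<Rightarrow> bool" where
  "bi_injective m \<longleftrightarrow> (\<forall>a a' b x x' c. m x' a' b = Some c \<longrightarrow> m x a b = Some c \<longrightarrow> x' = x \<and> a' = a)"

definition assoc_cond :: "('x \<Rightarrow> 'i pmagma) \<Rightarrow> ('x \<times> 'x \<Rightarrow> 'x \<times> 'x) \<Rightarrow> bool" where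
  "assoc_cond m S \<longleftrightarrow> (\<forall>x y a b c. \<exists>d.
      (case S (x, y) of (u, v) \<Rightarrow>
         Option.bind (m y b c) (\<lambda>bc. m x a bc) = Some d \<and>
         Option.bind (m u a b) (\<lambda>ab. m v ab c) = Some d))"

end

theory Submission
  imports Defs
begin

text \<open>The associativity condition forces every operation to be total. Rebracketing
  \<open>\<langle>a\<langle>b\<langle>cd\<rangle>\<^sub>z\<rangle>\<^sub>y\<rangle>\<^sub>x\<close> completely to the left along the two paths of the
  pentagon gives two expressions \<open>\<langle>\<langle>\<langle>ab\<rangle>\<^sub>r c\<rangle>\<^sub>s d\<rangle>\<^sub>t\<close> whose index triples
  \<open>(r, s, t)\<close> are \<open>S\<^sub>1\<^sub>2 S\<^sub>1\<^sub>3 S\<^sub>2\<^sub>3 (x, y, z)\<close> and \<open>S\<^sub>2\<^sub>3 S\<^sub>1\<^sub>2 (x, y, z)\<close>;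
  applying bi-injectivity three times to their common value shows the triples coincide.\<close>

lemma pentagon_mapI:
  fixes S :: "'a \<times> 'a \<Rightarrow> 'a \<times> 'a"
  assumes "\<And>x y z u v p q u1 v1 u2 v2 u3 v3.
    S (x, y) = (u, v) \<Longrightarrow> S (v, z) = (p, q) \<Longrightarrow> S (y, z) = (u1, v1) \<Longrightarrow>
    S (x, v1) = (u2, v2) \<Longrightarrow> S (u2, u1) = (u3, v3) \<Longrightarrow> u3 = u \<and> v3 = p \<and> v2 = q"
  shows "pentagon_map S"
  unfolding pentagon_map_def
proof
  fix t :: "'a \<times> 'a \<times> 'a"
  obtain x y z where t: "t = (x, y, z)" by (cases t)
  obtain u v where uv: "S (x, y) = (u, v)" by fastforce
  obtain p q where pq: "S (v, z) = (p, q)" by fastforce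
  obtain u1 v1 where 1: "S (y, z) = (u1, v1)" by fastforce
  obtain u2 v2 where 2: "S (x, v1) = (u2, v2)" by fastforce
  obtain u3 v3 where 3: "S (u2, u1) = (u3, v3)" by fastforce
  show "(S12 S \<circ> S13 S \<circ> S23 S) t = (S23 S \<circ> S12 S) t"
    using assms[OF uv pq 1 2 3] t uv pq 1 2 3 by (simp add: S12_def S13_def S23_def)
qed

lemma pentagon_map_if_assoc_cancel:
  fixes op :: "'x \<Rightarrow> 'i \<Rightarrow> 'i \<Rightarrow> 'i"
  assumes assoc: "\<And>x y u v a b c. S (x, y) = (u, v) \<Longrightarrow> op x a (op y b c) = op v (op u a b) c"
    and cancel: "\<And>x x' a a' b. op x' a' b = op x a b \<Longrightarrow> x' = x \<and> a' = a"
  shows "pentagon_map S"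
proof (rule pentagon_mapI)
  fix x y z u v p q u1 v1 u2 v2 u3 v3
  assume uv: "S (x, y) = (u, v)" and pq: "S (v, z) = (p, q)" and 1: "S (y, z) = (u1, v1)"
    and 2: "S (x, v1) = (u2, v2)" and 3: "S (u2, u1) = (u3, v3)"
  fix a b c d :: 'i
  have "op x a (op y b (op z c d)) = op q (op p (op u a b) c) d"
    using assoc[OF uv] assoc[OF pq] by simp
  moreover have "op x a (op y b (op z c d)) = op v2 (op v3 (op u3 a b) c) d"
    using assoc[OF 1] assoc[OF 2] assoc[OF 3] by simp
  ultimately have "op q (op p (op u a b) c) d = op v2 (op v3 (op u3 a b) c) d"
    by simp
  then show "u3 = u \<and> v3 = p \<and> v2 = q"
    using cancel by metis
qed

lemma assoc_cond_defined:
  assumes "assoc_cond m S"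
  shows "m x a b = Some (the (m x a b))"
proof -
  obtain d where "case S (x, x) of (u, v) \<Rightarrow>
      Option.bind (m x a b) (m x a) = Some d \<and> Option.bind (m u a a) (\<lambda>aa. m v aa b) = Some d"
    using assms unfolding assoc_cond_def by (elim allE[of _ x] allE[of _ a] allE[of _ b] exE)
  then have "Option.bind (m x a b) (m x a) \<noteq> None"
    by (auto split: prod.splits)
  then show ?thesis
    by (cases "m x a b") auto
qed

lemma assoc_cond_the:
  assumes "assoc_cond m S" and "S (x, y) = (u, v)"
  shows "the (m x a (the (m y b c))) = the (m v (the (m u a b)) c)"
proof -
  obtain d where "Option.bind (m y b c) (m x a) = Some d"
    and "Option.bind (m u a b) (\<lambda>ab. m v ab c) = Some d"
    using assms unfolding assoc_cond_def by fastforce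
  then show ?thesis
    using assoc_cond_defined[OF assms(1)] by (metis bind.simps(2) option.sel)
qed

lemma bi_injective_the:
  assumes "bi_injective m" and "m x a b \<noteq> None" and "m x' a' b \<noteq> None"
    and "the (m x' a' b) = the (m x a b)"
  shows "x' = x \<and> a' = a"
  using assms unfolding bi_injective_def by fastforce

theorem mainTheorem2:
  fixes m :: "'x \<Rightarrow> 'i \<Rightarrow> 'i \<Rightarrow> 'i option"
    and S :: "'x \<times> 'x \<Rightarrow> 'x \<times> 'x"
  assumes "bi_injective m"
    and "assoc_cond m S"
  shows "pentagon_map S"
proof (rule pentagon_map_if_assoc_cancel[where op = "\<lambda>x a b. the (m x a b)"])
  show "the (m x a (the (m y b c))) = the (m v (the (m u a b)) c)"
    if "S (x, y) = (u, v)" for x y u v a b c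
    using assoc_cond_the[OF assms(2) that] .
  show "x' = x \<and> a' = a" if "the (m x' a' b) = the (m x a b)" for x x' a a' b
    using bi_injective_the[OF assms(1) _ _ that] assoc_cond_defined[OF assms(2)]
    by (metis option.distinct(1))
qed

end
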